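(* Let $\mathcal{X}=\{x_1,\dots,x_N\}$, $\Theta=\{\theta_1,\dots,\theta_M\}$, $\mathcal{A}$ be finite, let $\hat v_D,\hat v_U:\mathcal{X}\times\Theta\times\mathcal{A}\to\mathbb{R}$ be given (modulated) utilities, $b_D(\cdot|x)\in\Delta\Theta$ for $x\in\mathcal{X}$, and $\mathcal{S}=\{s_{\{a^1,\dots,a^M\}}:a^l\in\mathcal{A}\}$. For a common prior $\mathbf p\in\Delta\mathcal{X}$ (held by the defender and all user types), call $\pi:\mathcal{X}\to\Delta\mathcal{S}$ credible at $\mathbf p$ if $\sum_{x}[\hat v_U(x,\theta_l,a^l)-\hat v_U(x,\theta_l,a^h)]\pi(s_{\{a^1,\dots,a^M\}}|x)\mathbf p(x)\ge0$ for all $s_{\{a^1,\dots,a^M\}}\in\mathcal{S}$, $a^h\in\mathcal{A}$, $l$; set $$\bar v_D(\pi,\mathbf p)=\sum_x\mathbf p(x)\sum_{s_{\{a^1,\dots,a^M\}}}\pi(s_{\{a^1,\dots,a^M\}}|x)\sum_{l=1}^M b_D(\theta_l|x)\hat v_D(x,\theta_l,a^l),$$ let $V_D(\mathbf p)$ be the maximum of $\bar v_D(\pi,\mathbf p)$ over credible $\pi$, and let $\tilde v_D(\mathbf p)$ be the maximum of $\bar v_D(\pi,\mathbf p)$ over credible zero-information $\pi$ (i.e. $\pi(s|x)=\pi(s|x')$ for all $s,x,x'$). Then there exists $\mathbf p^0_g\in\Delta\mathcal{X}$ maximizing $\tilde v_D$ over $\Delta\mathcal{X}$, and for any such $\mathbf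 p^0_g$ it also maximizes $V_D$ over $\Delta\mathcal{X}$ with $\tilde v_D(\mathbf p^0_g)=V_D(\mathbf p^0_g)=\max_{\mathbf p\in\Delta\mathcal{X}}V_D(\mathbf p)$. Consequently, the optimal value of the joint choice of the common prior $\mathbf p\in\Delta\mathcal{X}$ and a credible generator at $\mathbf p$ does not depend on the original initial belief, and it is attained by choosing $\mathbf p=\mathbf p^0_g$ together with a zero-information generator.
   Context: Defender–user game with an overt trust manipulator: the defender may choose the common initial belief over the state that both she and all user types hold; the modulator (utility transfer) is fixed and already incorporated into $\hat v_D,\hat v_U$. A signal $s_{\{a^1,\dots,a^M\}}$ prescribes action $a^l$ to type $\theta_l$. *)

theory Defs
  imports "HOL-Analysis.Analysis"
begin

(* A signal s_{a^1,...,a^M} is a function 't => 'a assigning action s l to type l;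
   the signal space S is therefore UNIV :: ('t => 'a) set. *)

definition dist_simplex :: "('x::finite \<Rightarrow> real) set" where
  "dist_simplex = {p. (\<forall>x. 0 \<le> p x) \<and> (\<Sum>x\<in>UNIV. p x) = 1}"

(* pi x s = pi(s | x); a generator maps each state to a distribution over signals *)
definition generator :: "('x::finite \<Rightarrow> ('t::finite \<Rightarrow> 'a::finite) \<Rightarrow> real) \<Rightarrow> bool" where
  "generator \<pi> \<longleftrightarrow> (\<forall>x. \<pi> x \<in> dist_simplex)"

definition credible ::
  "('x::finite \<Rightarrow> 't::finite \<Rightarrow> 'a::finite \<Rightarrow> real) \<Rightarrow> ('x \<Rightarrow> real)
     \<Rightarrow> ('x \<Rightarrow> ('t \<Rightarrow> 'a) \<Rightarrow> real) \<Rightarrow> bool" where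
  "credible vU p \<pi> \<longleftrightarrow>
     (\<forall>s ah l. (\<Sum>x\<in>UNIV. (vU x l (s l) - vU x l ah) * \<pi> x s * p x) \<ge> 0)"

definition zero_info :: "('x \<Rightarrow> ('t \<Rightarrow> 'a) \<Rightarrow> real) \<Rightarrow> bool" where
  "zero_info \<pi> \<longleftrightarrow> (\<forall>s x x'. \<pi> x s = \<pi> x' s)"

definition vbar ::
  "('x::finite \<Rightarrow> 't::finite \<Rightarrow> 'a::finite \<Rightarrow> real) \<Rightarrow> ('x \<Rightarrow> 't \<Rightarrow> real)
     \<Rightarrow> ('x \<Rightarrow> ('t \<Rightarrow> 'a) \<Rightarrow> real) \<Rightarrow> ('x \<Rightarrow> real) \<Rightarrow> real" where
  "vbar vD bD \<pi> p =
     (\<Sum>x\<in>UNIV. p x * (\<Sum>s\<in>UNIV. \<pi> x s * (\<Sum>l\<in>UNIV. bD x l * vD x l (s l))))"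

definition VD ::
  "('x::finite \<Rightarrow> 't::finite \<Rightarrow> 'a::finite \<Rightarrow> real) \<Rightarrow> ('x \<Rightarrow> 't \<Rightarrow> 'a \<Rightarrow> real)
     \<Rightarrow> ('x \<Rightarrow> 't \<Rightarrow> real) \<Rightarrow> ('x \<Rightarrow> real) \<Rightarrow> real" where
  "VD vD vU bD p = Sup {vbar vD bD \<pi> p | \<pi>. generator \<pi> \<and> credible vU p \<pi>}"

definition VD0 ::
  "('x::finite \<Rightarrow> 't::finite \<Rightarrow> 'a::finite \<Rightarrow> real) \<Rightarrow> ('x \<Rightarrow> 't \<Rightarrow> 'a \<Rightarrow> real)
     \<Rightarrow> ('x \<Rightarrow> 't \<Rightarrow> real) \<Rightarrow> ('x \<Rightarrow> real) \<Rightarrow> real" where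
  "VD0 vD vU bD p =
     Sup {vbar vD bD \<pi> p | \<pi>. generator \<pi> \<and> zero_info \<pi> \<and> credible vU p \<pi>}"

end

theory Submission
  imports Defs
begin

text \<open>
  A credible generator \<open>\<pi>\<close> at \<open>p\<close> splits the prior into the unnormalised posteriors
  \<open>q\<^sub>s x = \<pi>(s|x) p(x)\<close>, and credibility says precisely that the signal \<open>s\<close> is obedient under
  \<open>q\<^sub>s\<close>. Hence the defender's value of \<open>\<pi>\<close> is a convex combination of values of obedient
  (signal, belief) pairs, so it is bounded by the value \<open>M\<close> of the best such pair, which exists
  by compactness. Conversely, taking the belief of that pair as the common prior and always sending
  its signal is a credible zero-information generator of value \<open>M\<close>. For zero-information
  generators all posteriors equal the prior, so \<open>tilde v\<^sub>D(p)\<close> is the best value of a signal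
  obedient under \<open>p\<close>; its maximum over priors is therefore \<open>M\<close>, and every maximiser of
  \<open>tilde v\<^sub>D\<close> reaches \<open>M\<close> for \<open>V\<^sub>D\<close> as well.
\<close>

definition obedient ::
  "('x::finite \<Rightarrow> 't \<Rightarrow> 'a \<Rightarrow> real) \<Rightarrow> ('t \<Rightarrow> 'a) \<Rightarrow> ('x \<Rightarrow> real) \<Rightarrow> bool" where
  "obedient vU s q \<longleftrightarrow> (\<forall>l ah. 0 \<le> (\<Sum>x\<in>UNIV. (vU x l (s l) - vU x l ah) * q x))"

definition signal_payoff ::
  "('x::finite \<Rightarrow> 't::finite \<Rightarrow> 'a \<Rightarrow> real) \<Rightarrow> ('x \<Rightarrow> 't \<Rightarrow> real) \<Rightarrow> ('t \<Rightarrow> 'a)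
     \<Rightarrow> ('x \<Rightarrow> real) \<Rightarrow> real" where
  "signal_payoff vD bD s q = (\<Sum>x\<in>UNIV. q x * (\<Sum>l\<in>UNIV. bD x l * vD x l (s l)))"

definition point_generator :: "('t \<Rightarrow> 'a) \<Rightarrow> 'x \<Rightarrow> ('t \<Rightarrow> 'a) \<Rightarrow> real" where
  "point_generator s = (\<lambda>x t. if t = s then 1 else 0)"

lemma finite_ex_arg_max:
  fixes f :: "'a \<Rightarrow> 'b::linorder"
  assumes "finite S" "S \<noteq> {}"
  shows "\<exists>x\<in>S. \<forall>y\<in>S. f y \<le> f x"
proof -
  have "Max (f ` S) \<in> f ` S"
    using assms by simp
  then obtain x where "x \<in> S" "f x = Max (f ` S)"
    by (metis imageE)
  then show ?thesis
    using assms by (metis Max_ge finite_imageI image_eqI)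
qed

lemma credible_iff_obedient:
  "credible vU p \<pi> \<longleftrightarrow> (\<forall>s. obedient vU s (\<lambda>x. \<pi> x s * p x))"
  unfolding credible_def obedient_def by (auto simp: mult.assoc)

lemma obedient_scale_iff:
  fixes q :: "'x::finite \<Rightarrow> real"
  assumes "0 < c"
  shows "obedient vU s (\<lambda>x. c * q x) \<longleftrightarrow> obedient vU s q"
proof -
  have "(\<Sum>x\<in>UNIV. f x * (c * q x)) = c * (\<Sum>x\<in>UNIV. f x * q x)" for f :: "'x \<Rightarrow> real"
    by (simp add: sum_distrib_left mult_ac)
  then show ?thesis
    unfolding obedient_def using assms by (simp add: zero_le_mult_iff)
qed

lemma signal_payoff_scale: "signal_payoff vD bD s (\<lambda>x. c * q x) = c * signal_payoff vD bD s q"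
  unfolding signal_payoff_def by (simp add: sum_distrib_left mult_ac)

lemma obedient_exists:
  fixes vU :: "'x::finite \<Rightarrow> 't \<Rightarrow> 'a::finite \<Rightarrow> real"
  shows "\<exists>s. obedient vU s p"
proof -
  have "\<exists>a. \<forall>b. (\<Sum>x\<in>UNIV. p x * vU x l b) \<le> (\<Sum>x\<in>UNIV. p x * vU x l a)" for l
    using finite_ex_arg_max[of "UNIV :: 'a set" "\<lambda>b. \<Sum>x\<in>UNIV. p x * vU x l b"] by simp
  then obtain s where "\<And>l b. (\<Sum>x\<in>UNIV. p x * vU x l b) \<le> (\<Sum>x\<in>UNIV. p x * vU x l (s l))"
    by metis
  then have "obedient vU s p"
    unfolding obedient_def by (simp add: sum_subtractf right_diff_distrib mult.commute)
  then show ?thesis by blast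
qed

lemma generator_point_generator: "generator (point_generator s)"
  unfolding generator_def dist_simplex_def point_generator_def by simp

lemma zero_info_point_generator: "zero_info (point_generator s)"
  unfolding zero_info_def point_generator_def by simp

lemma credible_point_generator: "obedient vU s p \<Longrightarrow> credible vU p (point_generator s)"
  unfolding credible_iff_obedient point_generator_def obedient_def by simp

lemma vbar_eq_sum_signal_payoff:
  "vbar vD bD \<pi> p = (\<Sum>s\<in>UNIV. signal_payoff vD bD s (\<lambda>x. \<pi> x s * p x))"
proof -
  have "vbar vD bD \<pi> p
      = (\<Sum>x\<in>UNIV. \<Sum>s\<in>UNIV. \<pi> x s * p x * (\<Sum>l\<in>UNIV. bD x l * vD x l (s l)))"
    unfolding vbar_def by (simp add: sum_distrib_left mult_ac)
  also have "\<dots> = (\<Sum>s\<in>UNIV. signal_payoff vD bD s (\<lambda>x. \<pi> x s * p x))"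
    unfolding signal_payoff_def by (rule sum.swap)
  finally show ?thesis .
qed

lemma vbar_point_generator: "vbar vD bD (point_generator s) p = signal_payoff vD bD s p"
  unfolding vbar_def signal_payoff_def point_generator_def
  by (simp add: if_distrib[of "\<lambda>c. c * _"] cong: if_cong)

lemma vbar_le_if_signal_payoffs_le:
  assumes "generator \<pi>" "p \<in> dist_simplex"
    and "\<And>s. signal_payoff vD bD s (\<lambda>x. \<pi> x s * p x) \<le> (\<Sum>x\<in>UNIV. \<pi> x s * p x) * C"
  shows "vbar vD bD \<pi> p \<le> C"
proof -
  have "(\<Sum>s\<in>UNIV. \<Sum>x\<in>UNIV. \<pi> x s * p x) = (\<Sum>x\<in>UNIV. p x * (\<Sum>s\<in>UNIV. \<pi> x s))"
    by (subst sum.swap) (simp add: sum_distrib_left mult.commute)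
  also have "\<dots> = 1"
    using assms(1,2) by (simp add: generator_def dist_simplex_def)
  finally have total_mass: "(\<Sum>s\<in>UNIV. \<Sum>x\<in>UNIV. \<pi> x s * p x) = 1" .
  have "vbar vD bD \<pi> p \<le> (\<Sum>s\<in>UNIV. (\<Sum>x\<in>UNIV. \<pi> x s * p x) * C)"
    unfolding vbar_eq_sum_signal_payoff by (rule sum_mono) (rule assms(3))
  also have "\<dots> = C"
    using total_mass by (simp add: sum_distrib_right[symmetric])
  finally show ?thesis .
qed

lemma signal_payoff_le_by_normalisation:
  fixes q :: "'x::finite \<Rightarrow> real"
  assumes bound: "\<And>p. p \<in> dist_simplex \<Longrightarrow> obedient vU s p \<Longrightarrow> signal_payoff vD bD s p \<le> M"
    and nonneg: "\<And>x. 0 \<le> q x" and "obedient vU s q"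
  shows "signal_payoff vD bD s q \<le> (\<Sum>x\<in>UNIV. q x) * M"
proof (cases "(\<Sum>x\<in>UNIV. q x) = 0")
  case True
  then have "q = (\<lambda>x. 0)"
    using nonneg by (simp add: sum_nonneg_eq_0_iff fun_eq_iff)
  then show ?thesis
    by (simp add: signal_payoff_def)
next
  case False
  define c where "c = (\<Sum>x\<in>UNIV. q x)"
  have "0 < c"
    using False nonneg unfolding c_def by (simp add: sum_nonneg order_le_neq_trans)
  define p where "p x = q x / c" for x
  have q_eq: "q = (\<lambda>x. c * p x)"
    using \<open>0 < c\<close> by (simp add: p_def fun_eq_iff)
  have "p \<in> dist_simplex"
    using nonneg \<open>0 < c\<close> unfolding dist_simplex_def p_def c_def
    by (simp add: sum_divide_distrib[symmetric])
  moreover have "obedient vU s p"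
    using \<open>obedient vU s q\<close> q_eq by (simp add: obedient_scale_iff[OF \<open>0 < c\<close>])
  ultimately have "c * signal_payoff vD bD s p \<le> c * M"
    using bound \<open>0 < c\<close> by simp
  moreover have "signal_payoff vD bD s q = c * signal_payoff vD bD s p"
    by (subst q_eq) (rule signal_payoff_scale)
  ultimately show ?thesis
    by (simp add: c_def mult.commute)
qed

lemma vbar_credible_le:
  assumes bound: "\<And>s p. p \<in> dist_simplex \<Longrightarrow> obedient vU s p \<Longrightarrow> signal_payoff vD bD s p \<le> M"
    and "generator \<pi>" "p \<in> dist_simplex" "credible vU p \<pi>"
  shows "vbar vD bD \<pi> p \<le> M"
  using assms(2,3)
proof (rule vbar_le_if_signal_payoffs_le)
  fix s
  show "signal_payoff vD bD s (\<lambda>x. \<pi> x s * p x) \<le> (\<Sum>x\<in>UNIV. \<pi> x s * p x) * M"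
  proof (rule signal_payoff_le_by_normalisation)
    show "0 \<le> \<pi> x s * p x" for x
      using assms(2,3) by (simp add: generator_def dist_simplex_def)
    show "obedient vU s (\<lambda>x. \<pi> x s * p x)"
      using assms(4) by (simp add: credible_iff_obedient)
  qed (rule bound)
qed

lemma vbar_zero_info_le:
  assumes "generator \<pi>" "zero_info \<pi>" "credible vU p \<pi>"
    and bound: "\<And>s. obedient vU s p \<Longrightarrow> signal_payoff vD bD s p \<le> C"
  shows "vbar vD bD \<pi> p \<le> C"
proof -
  define \<sigma> where "\<sigma> = \<pi> undefined"
  have \<pi>_eq: "\<pi> x = \<sigma>" for x
    using assms(2) unfolding zero_info_def \<sigma>_def by blast
  have "\<sigma> \<in> dist_simplex"
    using assms(1) unfolding generator_def \<sigma>_def by blast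
  then have \<sigma>_nonneg: "0 \<le> \<sigma> s" and \<sigma>_sum: "(\<Sum>s\<in>UNIV. \<sigma> s) = 1" for s
    unfolding dist_simplex_def by auto
  have "\<sigma> s * signal_payoff vD bD s p \<le> \<sigma> s * C" for s
  proof (cases "\<sigma> s = 0")
    case False
    then have "0 < \<sigma> s"
      using \<sigma>_nonneg[of s] by linarith
    moreover have "obedient vU s (\<lambda>x. \<sigma> s * p x)"
      using assms(3) by (simp add: credible_iff_obedient \<pi>_eq mult.commute)
    ultimately have "signal_payoff vD bD s p \<le> C"
      by (simp add: obedient_scale_iff bound)
    then show ?thesis
      using \<sigma>_nonneg by (rule mult_left_mono)
  qed simp
  then have "vbar vD bD \<pi> p \<le> (\<Sum>s\<in>UNIV. \<sigma> s * C)"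
    unfolding vbar_eq_sum_signal_payoff \<pi>_eq
    by (intro sum_mono) (simp add: mult.commute signal_payoff_scale)
  also have "\<dots> = C"
    using \<sigma>_sum by (simp add: sum_distrib_right[symmetric])
  finally show ?thesis .
qed

lemma uniform_in_dist_simplex: "(\<lambda>x::'x::finite. 1 / real CARD('x)) \<in> dist_simplex"
  unfolding dist_simplex_def by simp

text \<open>Beliefs are transported to \<open>real ^ 'x\<close>, where Heine--Borel is available.\<close>

lemma compact_obedient_beliefs:
  "compact {v::real ^ 'x::finite. vec_nth v \<in> dist_simplex \<and> obedient vU s (vec_nth v)}"
  (is "compact ?K")
proof -
  have "?K \<subseteq> cball 0 1"
  proof
    fix v assume "v \<in> ?K"
    then have "(\<Sum>i\<in>UNIV. \<bar>v $ i\<bar>) = 1"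
      by (simp add: dist_simplex_def)
    then show "v \<in> cball 0 1"
      using norm_le_l1_cart[of v] by simp
  qed
  then have "bounded ?K"
    by (rule bounded_subset[OF bounded_cball])
  moreover have "closed ?K"
    unfolding dist_simplex_def obedient_def mem_Collect_eq
    by (intro closed_Collect_conj closed_Collect_all closed_Collect_le closed_Collect_eq
        continuous_intros)
  ultimately show ?thesis
    by (simp add: compact_eq_bounded_closed)
qed

lemma optimal_obedient_pair_exists:
  fixes vD vU :: "'x::finite \<Rightarrow> 't::finite \<Rightarrow> 'a::finite \<Rightarrow> real"
    and bD :: "'x \<Rightarrow> 't \<Rightarrow> real"
  obtains s0 p0 where "p0 \<in> dist_simplex" "obedient vU s0 p0"
    "\<And>s p. p \<in> dist_simplex \<Longrightarrow> obedient vU s p \<Longrightarrow>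
      signal_payoff vD bD s p \<le> signal_payoff vD bD s0 p0"
proof -
  define K where "K s = {v::real ^ 'x. vec_nth v \<in> dist_simplex \<and> obedient vU s (vec_nth v)}"
    for s
  define V where "V = (\<Union>s. (\<lambda>v. signal_payoff vD bD s (vec_nth v)) ` K s)"
  have "compact V"
    unfolding V_def K_def signal_payoff_def
    by (intro compact_UN finite compact_continuous_image compact_obedient_beliefs
        continuous_intros)
  moreover have "V \<noteq> {}"
  proof -
    obtain s where "obedient vU s (\<lambda>x. 1 / real CARD('x))"
      using obedient_exists by blast
    then have "vec_lambda (\<lambda>x. 1 / real CARD('x)) \<in> K s"
      using uniform_in_dist_simplex unfolding K_def by (simp add: vec_lambda_inverse)
    then show ?thesis
      unfolding V_def by blast
  qed
  ultimately obtain m where "m \<in> V" and m_max: "\<And>y. y \<in> V \<Longrightarrow> y \<le> m"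
    using compact_attains_sup by metis
  then obtain s0 v0 where "v0 \<in> K s0" and m_eq: "m = signal_payoff vD bD s0 (vec_nth v0)"
    unfolding V_def by blast
  show ?thesis
  proof (rule that)
    show "vec_nth v0 \<in> dist_simplex" "obedient vU s0 (vec_nth v0)"
      using \<open>v0 \<in> K s0\<close> unfolding K_def by auto
    fix s p assume "p \<in> dist_simplex" "obedient vU s p"
    then have "vec_lambda p \<in> K s"
      unfolding K_def by (simp add: vec_lambda_inverse)
    moreover have "signal_payoff vD bD s p = signal_payoff vD bD s (vec_nth (vec_lambda p))"
      by (simp add: vec_lambda_inverse)
    ultimately have "signal_payoff vD bD s p \<in> V"
      unfolding V_def by blast
    then show "signal_payoff vD bD s p \<le> signal_payoff vD bD s0 (vec_nth v0)"
      using m_max m_eq by simp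
  qed
qed

lemma VD0_eq_best_obedient_signal:
  fixes vD vU :: "'x::finite \<Rightarrow> 't::finite \<Rightarrow> 'a::finite \<Rightarrow> real"
    and bD :: "'x \<Rightarrow> 't \<Rightarrow> real"
  obtains s where "obedient vU s p" "VD0 vD vU bD p = signal_payoff vD bD s p"
    "\<And>s'. obedient vU s' p \<Longrightarrow> signal_payoff vD bD s' p \<le> signal_payoff vD bD s p"
proof -
  obtain s where s: "obedient vU s p"
    and s_max: "\<And>s'. obedient vU s' p \<Longrightarrow> signal_payoff vD bD s' p \<le> signal_payoff vD bD s p"
    using finite_ex_arg_max[of "{s. obedient vU s p}" "\<lambda>s. signal_payoff vD bD s p"]
      obedient_exists[of vU p] by auto
  have "VD0 vD vU bD p = signal_payoff vD bD s p"
    unfolding VD0_def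
  proof (rule cSup_eq_maximum)
    show "signal_payoff vD bD s p
        \<in> {vbar vD bD \<pi> p |\<pi>. generator \<pi> \<and> zero_info \<pi> \<and> credible vU p \<pi>}"
      using generator_point_generator zero_info_point_generator credible_point_generator[OF s]
        vbar_point_generator[symmetric] by blast
  next
    fix y assume "y \<in> {vbar vD bD \<pi> p |\<pi>. generator \<pi> \<and> zero_info \<pi> \<and> credible vU p \<pi>}"
    then show "y \<le> signal_payoff vD bD s p"
      using vbar_zero_info_le s_max by blast
  qed
  then show thesis
    using that s s_max by blast
qed

lemma VD_le:
  fixes vD vU :: "'x::finite \<Rightarrow> 't::finite \<Rightarrow> 'a::finite \<Rightarrow> real"
  assumes bound: "\<And>s p. p \<in> dist_simplex \<Longrightarrow> obedient vU s p \<Longrightarrow> signal_payoff vD bD s p \<le> M"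
    and "p \<in> dist_simplex"
  shows "VD vD vU bD p \<le> M"
  unfolding VD_def
proof (rule cSup_least)
  obtain s where "obedient vU s p"
    using obedient_exists by blast
  then show "{vbar vD bD \<pi> p |\<pi>. generator \<pi> \<and> credible vU p \<pi>} \<noteq> {}"
    using generator_point_generator credible_point_generator by blast
next
  fix y assume "y \<in> {vbar vD bD \<pi> p |\<pi>. generator \<pi> \<and> credible vU p \<pi>}"
  then show "y \<le> M"
    using vbar_credible_le[OF bound] assms(2) by blast
qed

lemma VD0_le_VD:
  fixes vD vU :: "'x::finite \<Rightarrow> 't::finite \<Rightarrow> 'a::finite \<Rightarrow> real"
    and bD :: "'x \<Rightarrow> 't \<Rightarrow> real"
  assumes "p \<in> dist_simplex"
  shows "VD0 vD vU bD p \<le> VD vD vU bD p"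
  unfolding VD0_def VD_def
proof (rule cSup_subset_mono)
  obtain s where "obedient vU s p"
    using obedient_exists by blast
  then show "{vbar vD bD \<pi> p |\<pi>. generator \<pi> \<and> zero_info \<pi> \<and> credible vU p \<pi>} \<noteq> {}"
    using generator_point_generator zero_info_point_generator credible_point_generator by blast
  obtain s0 p0 where "\<And>s p. p \<in> dist_simplex \<Longrightarrow> obedient vU s p \<Longrightarrow>
      signal_payoff vD bD s p \<le> signal_payoff vD bD s0 p0"
    using optimal_obedient_pair_exists by metis
  then show "bdd_above {vbar vD bD \<pi> p |\<pi>. generator \<pi> \<and> credible vU p \<pi>}"
    using vbar_credible_le assms by (intro bdd_aboveI) blast
qed blast

lemma optimal_if_VD0_attains_bound:
  fixes vD vU :: "'x::finite \<Rightarrow> 't::finite \<Rightarrow> 'a::finite \<Rightarrow> real"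
    and bD :: "'x \<Rightarrow> 't \<Rightarrow> real"
  assumes best: "\<And>s p. p \<in> dist_simplex \<Longrightarrow> obedient vU s p \<Longrightarrow> signal_payoff vD bD s p \<le> M"
    and "p0 \<in> dist_simplex" "M \<le> VD0 vD vU bD p0"
  shows "(\<forall>p\<in>dist_simplex. VD vD vU bD p \<le> VD vD vU bD p0)
    \<and> VD0 vD vU bD p0 = VD vD vU bD p0
    \<and> (\<exists>\<pi>0. generator \<pi>0 \<and> zero_info \<pi>0 \<and> credible vU p0 \<pi>0
           \<and> vbar vD bD \<pi>0 p0 = VD vD vU bD p0
           \<and> (\<forall>p\<in>dist_simplex. \<forall>\<pi>. generator \<pi> \<and> credible vU p \<pi>
                 \<longrightarrow> vbar vD bD \<pi> p \<le> vbar vD bD \<pi>0 p0))"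
proof -
  have VD0_p0: "VD0 vD vU bD p0 = M" and VD_p0: "VD vD vU bD p0 = M"
    using assms(3) VD0_le_VD[OF assms(2), of vD vU bD] VD_le[where vU = vU, OF best assms(2)]
    by linarith+
  obtain s0 where s0: "obedient vU s0 p0" "VD0 vD vU bD p0 = signal_payoff vD bD s0 p0"
    using VD0_eq_best_obedient_signal by metis
  then have "vbar vD bD (point_generator s0) p0 = M"
    using VD0_p0 by (simp add: vbar_point_generator)
  then show ?thesis
    using VD0_p0 VD_p0 VD_le[where vU = vU, OF best] generator_point_generator
      zero_info_point_generator credible_point_generator[OF s0(1)] vbar_credible_le[OF best]
    by (intro conjI exI[of _ "point_generator s0"]) auto
qed

theorem theorem3:
  fixes vD vU :: "'x::finite \<Rightarrow> 't::finite \<Rightarrow> 'a::finite \<Rightarrow> real"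
    and bD :: "'x \<Rightarrow> 't \<Rightarrow> real"
  assumes bD: "\<And>x. bD x \<in> dist_simplex"
  shows "(\<exists>p0\<in>dist_simplex. \<forall>p\<in>dist_simplex. VD0 vD vU bD p \<le> VD0 vD vU bD p0)
    \<and> (\<forall>p0\<in>dist_simplex. (\<forall>p\<in>dist_simplex. VD0 vD vU bD p \<le> VD0 vD vU bD p0) \<longrightarrow>
          (\<forall>p\<in>dist_simplex. VD vD vU bD p \<le> VD vD vU bD p0)
        \<and> VD0 vD vU bD p0 = VD vD vU bD p0
        \<and> (\<exists>\<pi>0. generator \<pi>0 \<and> zero_info \<pi>0 \<and> credible vU p0 \<pi>0
               \<and> vbar vD bD \<pi>0 p0 = VD vD vU bD p0
               \<and> (\<forall>p\<in>dist_simplex. \<forall>\<pi>. generator \<pi> \<and> credible vU p \<pi>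
                     \<longrightarrow> vbar vD bD \<pi> p \<le> vbar vD bD \<pi>0 p0)))"
proof -
  obtain s\<^sub>1 p\<^sub>1 where "p\<^sub>1 \<in> dist_simplex" "obedient vU s\<^sub>1 p\<^sub>1"
    and best: "\<And>s p. p \<in> dist_simplex \<Longrightarrow> obedient vU s p \<Longrightarrow>
      signal_payoff vD bD s p \<le> signal_payoff vD bD s\<^sub>1 p\<^sub>1"
    using optimal_obedient_pair_exists by metis
  define M where "M = signal_payoff vD bD s\<^sub>1 p\<^sub>1"
  have VD0_le_M: "VD0 vD vU bD p \<le> M" if "p \<in> dist_simplex" for p
    using VD0_le_VD[OF that, of vD vU bD] VD_le[where vU = vU, OF best that]
    unfolding M_def by linarith
  have "M \<le> VD0 vD vU bD p\<^sub>1"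
    using VD0_eq_best_obedient_signal[of vU p\<^sub>1 vD bD] \<open>obedient vU s\<^sub>1 p\<^sub>1\<close>
    unfolding M_def by metis
  then have "\<forall>p\<in>dist_simplex. VD0 vD vU bD p \<le> VD0 vD vU bD p\<^sub>1"
    using VD0_le_M by fastforce
  moreover have "M \<le> VD0 vD vU bD p0"
    if "\<forall>p\<in>dist_simplex. VD0 vD vU bD p \<le> VD0 vD vU bD p0" for p0
    using that \<open>p\<^sub>1 \<in> dist_simplex\<close> \<open>M \<le> VD0 vD vU bD p\<^sub>1\<close> by force
  ultimately show ?thesis
    using \<open>p\<^sub>1 \<in> dist_simplex\<close> optimal_if_VD0_attains_bound[OF best[folded M_def]] by blast
qed

end
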